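(* Let $M\ge1$ and let $\mathcal B\subset[0,1]$ be finite, $b_0=\max\mathcal B$. Let $$\Pi=\Big\{\pi\in[0,1]^{\{0,\dots,M-1\}\times\mathcal B\times\mathcal B}:\ \pi((m,b),b')=0\ \forall b'>b,\ \ \sum_{b'\le b}\pi((m,b),b')=1\ \forall m,b\Big\}.$$ For $\pi\in\Pi$ define $q(\pi)=\bm q\in[0,1]^{M\times\mathcal B}$ by $q_1(b)=\pi((0,b_0),b)$ and $q_{m+1}(b)=\sum_{b'\in\mathcal B}q_m(b')\pi((m,b'),b)$ for $m\in[M-1]$, $b\in\mathcal B$. Let $\mathcal Q_\Pi=\{q(\pi):\pi\in\Pi\}$ and $$\mathcal Q=\Big\{\bm q\in[0,1]^{M\times\mathcal B}:\ \sum_{b\in\mathcal B}q_m(b)=1\ \forall m\in[M],\ \ \sum_{b\le b'}q_{m+1}(b)\ge\sum_{b\le b'}q_m(b)\ \forall b'\in\mathcal B,\ m\in[M-1]\Big\}.$$ Then $\mathcal Q_\Pi=\mathcal Q$.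
   Context: A policy $\pi$ describes random generation of a non-increasing bid vector: $b_1$ is drawn from $\pi((0,b_0),\cdot)$ and $b_{m+1}$ from $\pi((m,b_m),\cdot)$; $q(\pi)_m(b)$ is then the marginal probability that $b_m=b$. *)

theory Defs
  imports "HOL-Analysis.Analysis"
begin

text \<open>Only values with m < M, b, b' in B matter; to make set
 equality meaningful we require all elements to be zero outside the domain
 (extensional representation of [0,1]^(domain)).\<close>

definition Policies :: "nat \<Rightarrow> real set \<Rightarrow> (nat \<Rightarrow> real \<Rightarrow> real \<Rightarrow> real) set" where
  "Policies M B = {p.
     (\<forall>m b b'. \<not> (m < M \<and> b \<in> B \<and> b' \<in> B) \<longrightarrow> p m b b' = 0) \<and>
     (\<forall>m<M. \<forall>b\<in>B. \<forall>b'\<in>B. 0 \<le> p m b b' \<and> p m b b' \<le> 1) \<and>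
     (\<forall>m<M. \<forall>b\<in>B. \<forall>b'\<in>B. b' > b \<longrightarrow> p m b b' = 0) \<and>
     (\<forall>m<M. \<forall>b\<in>B. (\<Sum>b'\<in>{b'\<in>B. b' \<le> b}. p m b b') = 1)}"

text \<open>Unrestricted recursion: qrec n corresponds to q_(n+1).\<close>
fun qrec :: "real set \<Rightarrow> (nat \<Rightarrow> real \<Rightarrow> real \<Rightarrow> real) \<Rightarrow> nat \<Rightarrow> real \<Rightarrow> real" where
  "qrec B p 0 b = p 0 (Max B) b"
| "qrec B p (Suc n) b = (\<Sum>b'\<in>B. qrec B p n b' * p (Suc n) b' b)"

definition qpol :: "nat \<Rightarrow> real set \<Rightarrow> (nat \<Rightarrow> real \<Rightarrow> real \<Rightarrow> real) \<Rightarrow> nat \<Rightarrow> real \<Rightarrow> real" where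
  "qpol M B p m b = (if m \<in> {1..M} \<and> b \<in> B then qrec B p (m - 1) b else 0)"

definition QPi :: "nat \<Rightarrow> real set \<Rightarrow> (nat \<Rightarrow> real \<Rightarrow> real) set" where
  "QPi M B = qpol M B ` Policies M B"

definition Qset :: "nat \<Rightarrow> real set \<Rightarrow> (nat \<Rightarrow> real \<Rightarrow> real) set" where
  "Qset M B = {q.
     (\<forall>m b. \<not> (m \<in> {1..M} \<and> b \<in> B) \<longrightarrow> q m b = 0) \<and>
     (\<forall>m\<in>{1..M}. \<forall>b\<in>B. 0 \<le> q m b \<and> q m b \<le> 1) \<and>
     (\<forall>m\<in>{1..M}. (\<Sum>b\<in>B. q m b) = 1) \<and>
     (\<forall>m\<in>{1..M-1}. \<forall>b'\<in>B.
        (\<Sum>b\<in>{b\<in>B. b \<le> b'}. q (Suc m) b) \<ge> (\<Sum>b\<in>{b\<in>B. b \<le> b'}. q m b))}"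

end

(* A policy acts on the bid marginals as a Markov kernel that never moves mass upwards, so
   q_(m+1) is the image of q_m under such a "downward" kernel. Images of a distribution under
   downward kernels are exactly the distributions it stochastically dominates: a downward kernel
   can only increase the mass below each threshold, and conversely a downward kernel from f to a
   dominated g is built by induction over the largest point t of the support, keeping the fraction
   g t / f t of the mass at t and handing the excess f t - g t to the next largest point. *)

theory Submission
  imports Defs
begin

definition down_stochastic :: "'a::linorder set \<Rightarrow> ('a \<Rightarrow> 'a \<Rightarrow> real) \<Rightarrow> bool" where
  "down_stochastic B K \<longleftrightarrow>
     (\<forall>x\<in>B. \<forall>y\<in>B. 0 \<le> K x y) \<and> (\<forall>x\<in>B. \<forall>y\<in>B. x < y \<longrightarrow> K x y = 0) \<and>
     (\<forall>x\<in>B. sum (K x) B = 1)"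

definition stoch_dominates :: "'a::linorder set \<Rightarrow> ('a \<Rightarrow> real) \<Rightarrow> ('a \<Rightarrow> real) \<Rightarrow> bool" where
  "stoch_dominates B f g \<longleftrightarrow>
     sum f B = sum g B \<and> (\<forall>c\<in>B. sum f {x\<in>B. x \<le> c} \<le> sum g {x\<in>B. x \<le> c})"

lemma down_stochastic_sum_atMost:
  assumes "finite B" "down_stochastic B K" "x \<in> B" "x \<le> c"
  shows "sum (K x) {y\<in>B. y \<le> c} = 1"
proof -
  have "sum (K x) {y\<in>B. y \<le> c} = (\<Sum>y\<in>B. if y \<le> c then K x y else 0)"
    using assms(1) by (simp add: sum.inter_filter)
  also have "\<dots> = sum (K x) B"
    using assms(2-4) by (intro sum.cong) (auto simp: down_stochastic_def)
  finally show ?thesis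
    using assms(2,3) by (simp add: down_stochastic_def)
qed

lemma down_stochastic_push_sum:
  assumes "finite B" "down_stochastic B K"
  shows "(\<Sum>y\<in>B. \<Sum>x\<in>B. f x * K x y) = sum f B"
proof -
  have "(\<Sum>y\<in>B. \<Sum>x\<in>B. f x * K x y) = (\<Sum>x\<in>B. f x * sum (K x) B)"
    by (subst sum.swap) (simp add: sum_distrib_left)
  then show ?thesis
    using assms(2) by (simp add: down_stochastic_def)
qed

lemma stoch_dominates_push:
  assumes "finite B" "down_stochastic B K" "\<forall>x\<in>B. 0 \<le> f x"
  shows "stoch_dominates B f (\<lambda>y. \<Sum>x\<in>B. f x * K x y)"
  unfolding stoch_dominates_def
proof (intro conjI ballI)
  show "sum f B = (\<Sum>y\<in>B. \<Sum>x\<in>B. f x * K x y)"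
    using down_stochastic_push_sum[OF assms(1,2)] by simp
next
  fix c
  let ?C = "{y\<in>B. y \<le> c}"
  have "sum f ?C = (\<Sum>x\<in>B. if x \<le> c then f x else 0)"
    using assms(1) by (simp add: sum.inter_filter)
  also have "\<dots> \<le> (\<Sum>x\<in>B. f x * sum (K x) ?C)"
    using assms down_stochastic_sum_atMost[OF assms(1,2)]
    by (intro sum_mono) (auto simp: down_stochastic_def intro!: mult_nonneg_nonneg sum_nonneg)
  also have "\<dots> = (\<Sum>y\<in>?C. \<Sum>x\<in>B. f x * K x y)"
    by (subst sum.swap) (simp add: sum_distrib_left)
  finally show "sum f ?C \<le> (\<Sum>y\<in>?C. \<Sum>x\<in>B. f x * K x y)" .
qed

lemma down_stochastic_insert_max:
  assumes "finite A" "\<forall>x\<in>A. x < t" "down_stochastic A K"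
    and "\<forall>y\<in>insert t A. 0 \<le> r y" "sum r (insert t A) = 1"
  shows "down_stochastic (insert t A) (\<lambda>x y. if x = t then r y else if y = t then 0 else K x y)"
  unfolding down_stochastic_def
proof (intro conjI ballI impI)
  have "t \<notin> A" using assms(2) by blast
  fix x assume x: "x \<in> insert t A"
  show "sum (\<lambda>y. if x = t then r y else if y = t then 0 else K x y) (insert t A) = 1"
  proof (cases "x = t")
    case False
    then have "x \<in> A" using x by simp
    have "sum (\<lambda>y. if y = t then 0 else K x y) A = sum (K x) A"
      using \<open>t \<notin> A\<close> by (intro sum.cong) auto
    then show ?thesis
      using False assms(1,3) \<open>t \<notin> A\<close> \<open>x \<in> A\<close> by (simp add: down_stochastic_def)
  qed (use assms(5) in simp)
  fix y assume y: "y \<in> insert t A"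
  show "0 \<le> (if x = t then r y else if y = t then 0 else K x y)"
    using assms(3,4) x y by (auto simp: down_stochastic_def)
  show "(if x = t then r y else if y = t then 0 else K x y) = 0" if "x < y"
    using assms(2,3) x y that by (auto simp: down_stochastic_def)
qed

lemma stoch_dominates_insert_max_shift:
  assumes "finite A" "A \<noteq> {}" "\<forall>x\<in>A. x < t" "stoch_dominates (insert t A) f g"
  shows "stoch_dominates A (\<lambda>x. f x + (if x = Max A then f t - g t else 0)) g"
proof -
  let ?h = "\<lambda>x. f x + (if x = Max A then f t - g t else 0)"
  have "t \<notin> A" using assms(3) by blast
  have "Max A \<in> A" using assms(1,2) by simp
  have sum_h: "sum ?h S = sum f S + (if Max A \<in> S then f t - g t else 0)" if "finite S" for S
    using that by (simp add: sum.distrib)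
  have total: "sum ?h A = sum g A"
    using assms(1,4) \<open>t \<notin> A\<close> \<open>Max A \<in> A\<close> by (simp add: sum_h stoch_dominates_def)
  show ?thesis
    unfolding stoch_dominates_def
  proof (intro conjI ballI)
    fix c assume "c \<in> A"
    show "sum ?h {x\<in>A. x \<le> c} \<le> sum g {x\<in>A. x \<le> c}"
    proof (cases "c = Max A")
      case True
      then have "{x\<in>A. x \<le> c} = A" using assms(1) by auto
      then show ?thesis using total by simp
    next
      case False
      then have "\<not> Max A \<le> c"
        using Max_ge[OF assms(1) \<open>c \<in> A\<close>] by auto
      then have "sum ?h {x\<in>A. x \<le> c} = sum f {x\<in>A. x \<le> c}"
        using assms(1) by (simp add: sum_h)
      moreover have "{x\<in>insert t A. x \<le> c} = {x\<in>A. x \<le> c}"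
        using assms(3) \<open>c \<in> A\<close> by force
      moreover have "sum f {x\<in>insert t A. x \<le> c} \<le> sum g {x\<in>insert t A. x \<le> c}"
        using assms(4) \<open>c \<in> A\<close> unfolding stoch_dominates_def by blast
      ultimately show ?thesis by simp
    qed
  qed (fact total)
qed

lemma stoch_dominates_insert_max_le:
  assumes "finite A" "\<forall>x\<in>A. x < t" "stoch_dominates (insert t A) f g"
  shows "g t \<le> f t"
proof -
  have "t \<notin> A" using assms(2) by blast
  have "sum f A \<le> sum g A"
  proof (cases "A = {}")
    case False
    then have "Max A \<in> A" using assms(1) by simp
    then have "{x\<in>insert t A. x \<le> Max A} = A"
      using assms(2) Max_ge[OF assms(1)] by fastforce
    moreover have "sum f {x\<in>insert t A. x \<le> Max A} \<le> sum g {x\<in>insert t A. x \<le> Max A}"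
      using assms(3) \<open>Max A \<in> A\<close> unfolding stoch_dominates_def by blast
    ultimately show ?thesis by simp
  qed simp
  then show ?thesis
    using assms(1,3) \<open>t \<notin> A\<close> by (simp add: stoch_dominates_def)
qed

lemma down_stochastic_transport_insert_max:
  assumes "finite A" "A \<noteq> {}" "\<forall>x\<in>A. x < t" "0 \<le> g t" "g t \<le> f t" "down_stochastic A K'"
    and K'_transport: "\<forall>y\<in>A. (\<Sum>x\<in>A. (f x + (if x = Max A then f t - g t else 0)) * K' x y) = g y"
  shows "\<exists>K. down_stochastic (insert t A) K \<and> (\<forall>y\<in>insert t A. (\<Sum>x\<in>insert t A. f x * K x y) = g y)"
proof -
  define t' where "t' = Max A"
  define e where "e = f t - g t"
  have "t \<notin> A" using assms(3) by blast
  have "t' \<in> A" using assms(1,2) by (simp add: t'_def)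
  have f_t: "f t = 0 \<Longrightarrow> g t = 0 \<and> e = 0"
    using assms(4,5) by (auto simp: e_def)
  \<comment> \<open>row of t: keep g t / f t at t and let the excess e follow K' from t';
    if f t = 0 any row will do\<close>
  define r where "r y = (if f t = 0 then (if y = t then 1 else 0)
      else if y = t then g t / f t else e / f t * K' t' y)" for y
  define K where "K x y = (if x = t then r y else if y = t then 0 else K' x y)" for x y
  have "\<forall>y\<in>insert t A. 0 \<le> r y"
    using assms(4-6) \<open>t' \<in> A\<close> by (auto simp: r_def e_def down_stochastic_def)
  moreover have "sum r (insert t A) = 1"
  proof (cases "f t = 0")
    case True
    then show ?thesis using assms(1) \<open>t \<notin> A\<close> by (simp add: r_def)
  next
    case False
    have "sum r A = e / f t * sum (K' t') A"
      using \<open>t \<notin> A\<close> False unfolding sum_distrib_left by (intro sum.cong) (auto simp: r_def)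
    also have "\<dots> = e / f t" using assms(6) \<open>t' \<in> A\<close> by (simp add: down_stochastic_def)
    finally show ?thesis
      using False assms(1) \<open>t \<notin> A\<close> by (simp add: r_def e_def add_divide_distrib[symmetric])
  qed
  ultimately have "down_stochastic (insert t A) K"
    unfolding K_def by (rule down_stochastic_insert_max[OF assms(1,3,6)])
  moreover have "(\<Sum>x\<in>insert t A. f x * K x y) = g y" if "y \<in> insert t A" for y
  proof (cases "y = t")
    case True
    have "(\<Sum>x\<in>A. f x * K x y) = 0"
      using True \<open>t \<notin> A\<close> by (auto simp: K_def intro!: sum.neutral)
    then show ?thesis using True f_t assms(1) \<open>t \<notin> A\<close> by (auto simp: K_def r_def)
  next
    case False
    then have "y \<in> A" using that by simp
    have "(\<Sum>x\<in>insert t A. f x * K x y) = f t * K t y + (\<Sum>x\<in>A. f x * K x y)"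
      using assms(1) \<open>t \<notin> A\<close> by (rule sum.insert)
    moreover have "f t * K t y = e * K' t' y"
      using False f_t by (auto simp: K_def r_def)
    moreover have "(\<Sum>x\<in>A. f x * K x y) = (\<Sum>x\<in>A. f x * K' x y)"
      using \<open>t \<notin> A\<close> False by (auto simp: K_def intro: sum.cong)
    moreover have "(\<Sum>x\<in>A. (f x + (if x = t' then e else 0)) * K' x y)
        = (\<Sum>x\<in>A. f x * K' x y + (if x = t' then e * K' t' y else 0))"
      by (intro sum.cong) (auto simp: distrib_right)
    then have "(\<Sum>x\<in>A. (f x + (if x = t' then e else 0)) * K' x y)
        = (\<Sum>x\<in>A. f x * K' x y) + e * K' t' y"
      using \<open>t' \<in> A\<close> assms(1) by (simp add: sum.distrib)
    moreover have "(\<Sum>x\<in>A. (f x + (if x = t' then e else 0)) * K' x y) = g y"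
      using K'_transport \<open>y \<in> A\<close> unfolding t'_def e_def by (rule bspec)
    ultimately show ?thesis by linarith
  qed
  ultimately show ?thesis by (intro exI[of _ K]) blast
qed

lemma down_stochastic_transport_exists:
  assumes "finite B" "\<forall>x\<in>B. 0 \<le> f x" "\<forall>y\<in>B. 0 \<le> g y" "stoch_dominates B f g"
  shows "\<exists>K. down_stochastic B K \<and> (\<forall>y\<in>B. (\<Sum>x\<in>B. f x * K x y) = g y)"
  using assms
proof (induction B arbitrary: f g rule: finite_linorder_max_induct)
  case empty
  then show ?case by (simp add: down_stochastic_def)
next
  case (insert t A)
  have "g t \<le> f t"
    using stoch_dominates_insert_max_le[OF insert.hyps(1,2) insert.prems(3)] .
  show ?case
  proof (cases "A = {}")
    case True
    then have "f t = g t" using insert.prems(3) by (simp add: stoch_dominates_def)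
    then show ?thesis
      using True by (intro exI[of _ "\<lambda>_ _. 1"]) (simp add: down_stochastic_def)
  next
    case False
    let ?f' = "\<lambda>x. f x + (if x = Max A then f t - g t else 0)"
    have "\<forall>x\<in>A. 0 \<le> ?f' x"
      using insert.prems(1) \<open>g t \<le> f t\<close> by simp
    moreover have "\<forall>y\<in>A. 0 \<le> g y"
      using insert.prems(2) by simp
    moreover have "stoch_dominates A ?f' g"
      by (rule stoch_dominates_insert_max_shift[OF insert.hyps(1) False insert.hyps(2) insert.prems(3)])
    ultimately have "\<exists>K'. down_stochastic A K' \<and> (\<forall>y\<in>A. (\<Sum>x\<in>A. ?f' x * K' x y) = g y)"
      by (rule insert.IH)
    then obtain K' where K': "down_stochastic A K'" "\<forall>y\<in>A. (\<Sum>x\<in>A. ?f' x * K' x y) = g y"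
      by blast
    have "0 \<le> g t"
      using insert.prems(2) by simp
    show ?thesis
      by (rule down_stochastic_transport_insert_max[where f = f and g = g,
            OF insert.hyps(1) False insert.hyps(2) \<open>0 \<le> g t\<close> \<open>g t \<le> f t\<close> K'])
  qed
qed

lemma down_stochastic_cong:
  assumes "\<And>x y. x \<in> B \<Longrightarrow> y \<in> B \<Longrightarrow> K x y = K' x y"
  shows "down_stochastic B K \<longleftrightarrow> down_stochastic B K'"
proof -
  have "sum (K x) B = sum (K' x) B" if "x \<in> B" for x
    using assms that by (intro sum.cong) auto
  then show ?thesis
    using assms by (simp add: down_stochastic_def)
qed

lemma Policies_iff_down_stochastic:
  assumes "finite B"
  shows "p \<in> Policies M B \<longleftrightarrow>
    (\<forall>m b b'. \<not> (m < M \<and> b \<in> B \<and> b' \<in> B) \<longrightarrow> p m b b' = 0) \<and>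
    (\<forall>m<M. down_stochastic B (p m))"
proof -
  have sum_atMost: "sum (p m b) {b'\<in>B. b' \<le> b} = sum (p m b) B"
    if "\<forall>b'\<in>B. b < b' \<longrightarrow> p m b b' = 0" for m b
    using assms that by (intro sum.mono_neutral_left) auto
  have le_one: "p m b b' \<le> 1" if "down_stochastic B (p m)" "b \<in> B" "b' \<in> B" for m b b'
  proof -
    have "p m b b' \<le> sum (p m b) B"
      using assms that by (intro member_le_sum) (auto simp: down_stochastic_def)
    then show ?thesis
      using that by (simp add: down_stochastic_def)
  qed
  show ?thesis
    unfolding Policies_def down_stochastic_def
    using sum_atMost le_one[unfolded down_stochastic_def] by (auto 0 3)
qed

lemma qrec_distribution:
  assumes "p \<in> Policies M B" "finite B" "B \<noteq> {}" "n < M"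
  shows "(\<forall>b\<in>B. 0 \<le> qrec B p n b) \<and> sum (qrec B p n) B = 1"
  using assms(4)
proof (induction n)
  case 0
  have "down_stochastic B (p 0)"
    using assms(1,2) 0 by (simp add: Policies_iff_down_stochastic)
  moreover have "Max B \<in> B"
    using assms(2,3) by simp
  ultimately show ?case
    by (simp add: down_stochastic_def)
next
  case (Suc n)
  then have IH: "\<forall>b\<in>B. 0 \<le> qrec B p n b" "sum (qrec B p n) B = 1"
    by simp_all
  have "down_stochastic B (p (Suc n))"
    using assms(1,2) Suc.prems by (simp add: Policies_iff_down_stochastic)
  then show ?case
    using IH down_stochastic_push_sum[OF assms(2)]
    by (auto simp: down_stochastic_def intro!: sum_nonneg mult_nonneg_nonneg)
qed

lemma qrec_stoch_dominates_qrec_Suc: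
  assumes "p \<in> Policies M B" "finite B" "B \<noteq> {}" "Suc n < M"
  shows "stoch_dominates B (qrec B p n) (qrec B p (Suc n))"
proof -
  have "down_stochastic B (p (Suc n))"
    using assms(1,2,4) by (simp add: Policies_iff_down_stochastic)
  moreover have "\<forall>b\<in>B. 0 \<le> qrec B p n b"
    using qrec_distribution[OF assms(1-3)] assms(4) by simp
  moreover have "qrec B p (Suc n) = (\<lambda>b. \<Sum>b'\<in>B. qrec B p n b' * p (Suc n) b' b)"
    by (rule ext) simp
  ultimately show ?thesis
    using stoch_dominates_push[OF assms(2)] by simp
qed

lemma qpol_in_Qset:
  assumes "p \<in> Policies M B" "finite B" "B \<noteq> {}"
  shows "qpol M B p \<in> Qset M B"
proof -
  have qpol_sum: "sum (qpol M B p m) S = sum (qrec B p (m - 1)) S"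
    if "m \<in> {1..M}" "S \<subseteq> B" for m S
    using that by (intro sum.cong) (auto simp: qpol_def)
  have distr: "(\<forall>b\<in>B. 0 \<le> qrec B p (m - 1) b) \<and> sum (qrec B p (m - 1)) B = 1"
    if "m \<in> {1..M}" for m
    using that by (intro qrec_distribution[OF assms]) auto
  have le_one: "qrec B p (m - 1) b \<le> 1" if "m \<in> {1..M}" "b \<in> B" for m b
    using member_le_sum[of b B "qrec B p (m - 1)"] distr[OF that(1)] assms(2) that(2) by simp
  have cumulative: "sum (qpol M B p m) {b\<in>B. b \<le> c} \<le> sum (qpol M B p (Suc m)) {b\<in>B. b \<le> c}"
    if m: "m \<in> {1..M - 1}" and "c \<in> B" for m c
  proof -
    obtain k where "m = Suc k" "Suc k < M"
      using m by (cases m) auto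
    then have "stoch_dominates B (qrec B p (m - 1)) (qrec B p m)"
      using qrec_stoch_dominates_qrec_Suc[OF assms] by simp
    then have "sum (qrec B p (m - 1)) {b\<in>B. b \<le> c} \<le> sum (qrec B p m) {b\<in>B. b \<le> c}"
      using \<open>c \<in> B\<close> by (simp add: stoch_dominates_def)
    moreover have "m \<in> {1..M}" "Suc m \<in> {1..M}"
      using m by auto
    ultimately show ?thesis
      using qpol_sum[of m "{b\<in>B. b \<le> c}"] qpol_sum[of "Suc m" "{b\<in>B. b \<le> c}"] by simp
  qed
  show ?thesis
    unfolding Qset_def
    using distr le_one qpol_sum cumulative by (auto simp: qpol_def)
qed

lemma Qset_imp_QPi:
  assumes "q \<in> Qset M B" "finite B" "B \<noteq> {}"
  shows "q \<in> QPi M B"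
proof -
  have q_zero: "\<And>m b. \<not> (m \<in> {1..M} \<and> b \<in> B) \<Longrightarrow> q m b = 0"
    and q_nonneg: "\<And>m b. m \<in> {1..M} \<Longrightarrow> b \<in> B \<Longrightarrow> 0 \<le> q m b"
    and q_sum: "\<And>m. m \<in> {1..M} \<Longrightarrow> sum (q m) B = 1"
    and q_cumulative: "\<And>m c. m \<in> {1..M - 1} \<Longrightarrow> c \<in> B \<Longrightarrow>
        sum (q m) {b\<in>B. b \<le> c} \<le> sum (q (Suc m)) {b\<in>B. b \<le> c}"
    using assms(1) unfolding Qset_def by blast+
  have "\<exists>K. down_stochastic B K \<and> (\<forall>y\<in>B. (\<Sum>x\<in>B. q m x * K x y) = q (Suc m) y)"
    if "m \<in> {1..M - 1}" for m
    using that by (intro down_stochastic_transport_exists[OF assms(2)])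
      (auto simp: stoch_dominates_def q_nonneg q_sum q_cumulative)
  then obtain Kq where Kq: "\<And>m. m \<in> {1..M - 1} \<Longrightarrow> down_stochastic B (Kq m)"
    "\<And>m y. m \<in> {1..M - 1} \<Longrightarrow> y \<in> B \<Longrightarrow> (\<Sum>x\<in>B. q m x * Kq m x y) = q (Suc m) y"
    by metis
  \<comment> \<open>rows other than Max B of the first kernel are never reached; any choice works\<close>
  define K0 where "K0 b b' = (if b = Max B then q 1 b' else if b' = b then 1 else 0)" for b b'
  define p where "p m b b' = (if m < M \<and> b \<in> B \<and> b' \<in> B
      then if m = 0 then K0 b b' else Kq m b b' else 0)" for m b b'
  have "Max B \<in> B" using assms(2,3) by simp
  have "down_stochastic B K0" if "0 < M"
    unfolding down_stochastic_def
  proof (intro conjI ballI impI)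
    have "1 \<in> {1..M}" using that by simp
    fix b assume "b \<in> B"
    show "sum (K0 b) B = 1"
      using q_sum[OF \<open>1 \<in> {1..M}\<close>] assms(2) \<open>b \<in> B\<close>
      by (cases "b = Max B") (simp_all add: K0_def)
    fix b' assume "b' \<in> B"
    show "0 \<le> K0 b b'"
      using q_nonneg[OF \<open>1 \<in> {1..M}\<close> \<open>b' \<in> B\<close>] by (simp add: K0_def)
    show "K0 b b' = 0" if "b < b'"
      using that Max_ge[OF assms(2) \<open>b' \<in> B\<close>] by (auto simp: K0_def)
  qed
  moreover have "down_stochastic B (p m) \<longleftrightarrow> down_stochastic B (if m = 0 then K0 else Kq m)"
    if "m < M" for m
    using that by (intro down_stochastic_cong) (simp add: p_def)
  ultimately have "p \<in> Policies M B"
    using Kq(1) assms(2) by (auto simp: Policies_iff_down_stochastic p_def)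
  moreover have "\<forall>b\<in>B. qrec B p n b = q (Suc n) b" if "n < M" for n
    using that
  proof (induction n)
    case 0
    then show ?case using \<open>Max B \<in> B\<close> by (simp add: p_def K0_def)
  next
    case (Suc n)
    then show ?case
      using Kq(2)[of "Suc n"] by (simp add: p_def)
  qed
  then have "qpol M B p = q"
    using q_zero by (auto simp: fun_eq_iff qpol_def)
  ultimately show ?thesis
    unfolding QPi_def by blast
qed

theorem lemma1:
  fixes M :: nat and B :: "real set"
  assumes "M \<ge> 1" and "finite B" and "B \<noteq> {}" and "B \<subseteq> {0..1}"
  shows "QPi M B = Qset M B"
  \<comment> \<open>neither M \<ge> 1 nor B \<subseteq> {0..1} is needed\<close>
  using qpol_in_Qset Qset_imp_QPi assms(2,3) unfolding QPi_def by blast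

end
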